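(* If $T$ is a minimal tree with $|T|\ge 18$, then the root of $T$ has exactly two children, and each child of the root has exactly two children.
   Context: A rooted tree $T$ is a finite tree with a distinguished vertex, its root; its order $|T|$ is its number of vertices. For vertices $u,v$, the infimum of $u$ and $v$ is the vertex common to the path from $u$ to the root and the path from $v$ to the root that is furthest from the root. A set $X\subseteq V(T)$ is infima closed if the infimum of any two elements of $X$ lies in $X$. $I(T)$ denotes the number of nonempty infima closed subsets of $V(T)$. For $n\ge1$, $m_n=\min\{I(T): |T|=n\}$; a rooted tree $T$ with $I(T)=m_{|T|}$ is called minimal. *)

theory Defs
  imports Main
begin

text \<open>Rooted trees: a node with a (finite) list of subtrees, the root being the top node.
  Vertices are represented by their addresses (paths of child indices from the root).\<close>
datatype rtree = Node "rtree list"

fun children :: "rtree \<Rightarrow> rtree list" where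
  "children (Node ts) = ts"

function verts :: "rtree \<Rightarrow> nat list set" where
  "verts (Node ts) = insert [] (\<Union>i<length ts. Cons i ` verts (ts ! i))"
  by pat_completeness auto
termination
  by (relation "measure size") (auto simp: less_Suc_eq_le intro!: size_list_estimation' nth_mem)

definition order :: "rtree \<Rightarrow> nat" where
  "order T = card (verts T)"

text \<open>Infimum of two vertices: the deepest common ancestor = longest common prefix of addresses.\<close>
fun infimum :: "nat list \<Rightarrow> nat list \<Rightarrow> nat list" where
  "infimum (a # xs) (b # ys) = (if a = b then a # infimum xs ys else [])"
| "infimum _ _ = []"

definition infima_closed :: "rtree \<Rightarrow> nat list set \<Rightarrow> bool" where
  "infima_closed T X \<longleftrightarrow> X \<subseteq> verts T \<and> (\<forall>u\<in>X. \<forall>v\<in>X. infimum u v \<in> X)"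

definition I :: "rtree \<Rightarrow> nat" where
  "I T = card {X. X \<noteq> {} \<and> infima_closed T X}"

definition m :: "nat \<Rightarrow> nat" where
  "m n = Min {I T | T. order T = n}"

definition minimal :: "rtree \<Rightarrow> bool" where
  "minimal T \<longleftrightarrow> I T = m (order T)"

end

theory Submission
  imports Defs "HOL-Library.FuncSet" "HOL-Library.Multiset"
begin

(* Splitting an infima closed set according to whether it contains the root gives the
   recurrence I T = sum_i I T_i + prod_i (1 + I T_i) over the branches T_i of the root.
   Consequently the branches of a minimal tree are minimal and m is strictly increasing.
   A tree of order at least 8 whose root does not have exactly two children can be improved
   without changing its order: a single child c is replaced by a leaf next to the children
   of c; a branch of order at least 8, which is binary by induction, is rotated towards the
   root; and three branches of order at most 7, for which m is known exactly, are merged into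
   one minimal branch whose value is bounded by explicit trees (if there are no further
   branches, the whole tree is compared with an explicit tree instead). For order at least 18 one more
   rotation shows that both branches of the root have order at least 8, so they are binary
   as well. *)

declare verts.simps [simp del]

lemma Nil_in_verts: "[] \<in> verts T"
  by (cases T) (simp add: verts.simps)

lemma Cons_in_verts: "i # u \<in> verts (Node ts) \<longleftrightarrow> i < length ts \<and> u \<in> verts (ts ! i)"
  by (auto simp: verts.simps)

lemma finite_verts: "finite (verts T)"
  by (induction T) (auto simp: verts.simps)

lemma order_Node: "order (Node ts) = Suc (sum_list (map order ts))"
proof -
  let ?V = "\<Union>i<length ts. Cons i ` verts (ts ! i)"
  have "card ?V = (\<Sum>i<length ts. card (Cons i ` verts (ts ! i)))"
    by (rule card_UN_disjoint) (auto simp: finite_verts)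
  also have "\<dots> = sum_list (map order ts)"
    by (simp add: card_image order_def sum.list_conv_set_nth atLeast0LessThan)
  moreover have "finite ?V" "[] \<notin> ?V"
    by (auto simp: finite_verts)
  ultimately show ?thesis
    unfolding order_def verts.simps[of ts] by (simp add: card_insert_disjoint)
qed

section \<open>The recurrence for I\<close>

definition infima_closed_sets :: "rtree \<Rightarrow> nat list set set" where
  "infima_closed_sets T = {X. infima_closed T X}"

lemma finite_infima_closed_sets: "finite (infima_closed_sets T)"
  by (rule finite_subset[of _ "Pow (verts T)"])
     (auto simp: infima_closed_sets_def infima_closed_def finite_verts)

lemma card_infima_closed_sets: "card (infima_closed_sets T) = Suc (I T)"
proof -
  have "{} \<in> infima_closed_sets T"
    by (simp add: infima_closed_sets_def infima_closed_def)
  moreover have "{X. X \<noteq> {} \<and> infima_closed T X} = infima_closed_sets T - {{}}"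
    by (auto simp: infima_closed_sets_def)
  ultimately show ?thesis
    using finite_infima_closed_sets card_Suc_Diff1 by (fastforce simp: I_def)
qed

lemma infima_closed_Cons_image:
  "i < length ts \<Longrightarrow> infima_closed (ts ! i) Y \<Longrightarrow> infima_closed (Node ts) (Cons i ` Y)"
  by (auto simp: infima_closed_def Cons_in_verts)

lemma infima_closed_Cons_slice:
  assumes "infima_closed (Node ts) X" "i < length ts"
  shows "infima_closed (ts ! i) {u. i # u \<in> X}"
proof -
  have "infimum (i # u) (i # v) \<in> X" if "i # u \<in> X" "i # v \<in> X" for u v
    using assms(1) that unfolding infima_closed_def by blast
  then show ?thesis
    using assms by (auto simp: infima_closed_def Cons_in_verts)
qed

lemma rootless_infima_closed_sets:
  "{X. X \<noteq> {} \<and> infima_closed (Node ts) X \<and> [] \<notin> X} =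
   (\<Union>i<length ts. image (Cons i) ` {Y. Y \<noteq> {} \<and> infima_closed (ts ! i) Y})"
  (is "?L = ?R")
proof (intro equalityI subsetI)
  fix X assume "X \<in> ?L"
  then have X: "X \<noteq> {}" "infima_closed (Node ts) X" "[] \<notin> X" by auto
  then obtain i u where iu: "i # u \<in> X"
    by (metis all_not_in_conv neq_Nil_conv)
  have "\<exists>v. y = i # v" if "y \<in> X" for y
  proof (cases y)
    case Nil
    with that X show ?thesis by simp
  next
    case (Cons j v)
    have "infimum (i # u) y \<in> X"
      using X(2) iu that by (simp add: infima_closed_def)
    with X(3) Cons show ?thesis by (cases "i = j") simp_all
  qed
  then have "X = Cons i ` {v. i # v \<in> X}" by blast
  moreover have "i < length ts"
    using X(2) iu by (auto simp: infima_closed_def Cons_in_verts)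
  moreover have "infima_closed (ts ! i) {v. i # v \<in> X}"
    using X(2) \<open>i < length ts\<close> by (rule infima_closed_Cons_slice)
  moreover have "{v. i # v \<in> X} \<noteq> {}"
    using iu by blast
  ultimately show "X \<in> ?R"
    by (intro UN_I[of i] image_eqI[of X _ "{v. i # v \<in> X}"]) auto
next
  fix X assume "X \<in> ?R"
  then show "X \<in> ?L"
    using infima_closed_Cons_image by blast
qed

lemma card_rootless_infima_closed_sets:
  "card {X. X \<noteq> {} \<and> infima_closed (Node ts) X \<and> [] \<notin> X} = sum_list (map I ts)"
proof -
  let ?N = "\<lambda>i. {Y. Y \<noteq> {} \<and> infima_closed (ts ! i) Y}"
  have "finite (?N i)" for i
    by (rule finite_subset[OF _ finite_infima_closed_sets]) (auto simp: infima_closed_sets_def)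
  then have "card (\<Union>i<length ts. image (Cons i) ` ?N i) =
      (\<Sum>i<length ts. card (image (Cons i) ` ?N i))"
    by (intro card_UN_disjoint) auto
  also have "\<dots> = (\<Sum>i<length ts. I (ts ! i))"
    by (intro sum.cong refl, subst card_image) (auto simp: inj_on_def I_def)
  also have "\<dots> = sum_list (map I ts)"
    by (simp add: sum.list_conv_set_nth atLeast0LessThan)
  finally show ?thesis by (simp add: rootless_infima_closed_sets)
qed

definition graft :: "nat \<Rightarrow> (nat \<Rightarrow> nat list set) \<Rightarrow> nat list set" where
  "graft k f = insert [] (\<Union>i<k. Cons i ` f i)"

lemma Nil_in_graft: "[] \<in> graft k f"
  by (simp add: graft_def)

lemma Cons_in_graft: "i # u \<in> graft k f \<longleftrightarrow> i < k \<and> u \<in> f i"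
  by (auto simp: graft_def)

lemma infima_closed_graft:
  assumes "\<And>i. i < length ts \<Longrightarrow> infima_closed (ts ! i) (f i)"
  shows "infima_closed (Node ts) (graft (length ts) f)"
  unfolding infima_closed_def
proof (intro conjI ballI)
  show "graft (length ts) f \<subseteq> verts (Node ts)"
    using assms by (force simp: graft_def infima_closed_def Cons_in_verts Nil_in_verts)
next
  fix u v assume "u \<in> graft (length ts) f" "v \<in> graft (length ts) f"
  then consider "u = [] \<or> v = []"
    | i j u' v' where "u = i # u'" "v = j # v'" "i < length ts" "u' \<in> f i" "v' \<in> f j"
    by (cases u; cases v) (auto simp: Cons_in_graft)
  then show "infimum u v \<in> graft (length ts) f"
  proof cases
    case 1
    then show ?thesis by (cases u; cases v) (auto simp: Nil_in_graft)
  next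
    case 2
    then show ?thesis
      using assms[of i] by (auto simp: Nil_in_graft Cons_in_graft infima_closed_def)
  qed
qed

lemma rooted_infima_closed_sets:
  "{X. infima_closed (Node ts) X \<and> [] \<in> X} =
   graft (length ts) ` (\<Pi>\<^sub>E i\<in>{..<length ts}. infima_closed_sets (ts ! i))"
  (is "?L = ?R")
proof (intro equalityI subsetI)
  fix X assume X: "X \<in> ?L"
  let ?f = "\<lambda>i\<in>{..<length ts}. {u. i # u \<in> X}"
  have "?f \<in> (\<Pi>\<^sub>E i\<in>{..<length ts}. infima_closed_sets (ts ! i))"
    using X infima_closed_Cons_slice by (auto simp: infima_closed_sets_def)
  moreover have "X = graft (length ts) ?f"
  proof
    show "X \<subseteq> graft (length ts) ?f"
    proof
      fix x assume "x \<in> X"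
      with X show "x \<in> graft (length ts) ?f"
        by (cases x) (auto simp: Nil_in_graft Cons_in_graft infima_closed_def Cons_in_verts)
    qed
  qed (use X in \<open>auto simp: graft_def\<close>)
  ultimately show "X \<in> ?R" by blast
next
  fix X assume "X \<in> ?R"
  then obtain f where f: "f \<in> (\<Pi>\<^sub>E i\<in>{..<length ts}. infima_closed_sets (ts ! i))"
    and X: "X = graft (length ts) f" by blast
  have "infima_closed (ts ! i) (f i)" if "i < length ts" for i
    using PiE_mem[OF f] that by (simp add: infima_closed_sets_def)
  then have "infima_closed (Node ts) X"
    unfolding X by (rule infima_closed_graft)
  then show "X \<in> ?L" by (simp add: X Nil_in_graft)
qed

lemma card_rooted_infima_closed_sets:
  "card {X. infima_closed (Node ts) X \<and> [] \<in> X} = prod_list (map (\<lambda>t. Suc (I t)) ts)"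
proof -
  let ?P = "\<Pi>\<^sub>E i\<in>{..<length ts}. infima_closed_sets (ts ! i)"
  have "inj_on (graft (length ts)) ?P"
  proof (rule inj_onI)
    fix f g assume "f \<in> ?P" "g \<in> ?P" "graft (length ts) f = graft (length ts) g"
    moreover have "{u. i # u \<in> graft k h} = h i" if "i < k" for i k h
      using that by (simp add: Cons_in_graft)
    ultimately show "f = g" by (metis PiE_ext lessThan_iff)
  qed
  then have "card (graft (length ts) ` ?P) = (\<Prod>i<length ts. card (infima_closed_sets (ts ! i)))"
    by (simp add: card_image card_PiE finite_infima_closed_sets)
  also have "\<dots> = prod_list (map (\<lambda>t. Suc (I t)) ts)"
    by (simp add: card_infima_closed_sets prod.list_conv_set_nth atLeast0LessThan)
  finally show ?thesis by (simp add: rooted_infima_closed_sets)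
qed

lemma I_Node: "I (Node ts) = sum_list (map I ts) + prod_list (map (\<lambda>t. Suc (I t)) ts)"
proof -
  let ?A = "{X. X \<noteq> {} \<and> infima_closed (Node ts) X \<and> [] \<notin> X}"
  let ?B = "{X. infima_closed (Node ts) X \<and> [] \<in> X}"
  have "finite (?A \<union> ?B)"
    by (rule finite_subset[OF _ finite_infima_closed_sets]) (auto simp: infima_closed_sets_def)
  moreover have "{X. X \<noteq> {} \<and> infima_closed (Node ts) X} = ?A \<union> ?B" by auto
  ultimately have "I (Node ts) = card (?A \<union> ?B)"
    by (simp add: I_def)
  also have "\<dots> = card ?A + card ?B"
    using \<open>finite (?A \<union> ?B)\<close> by (intro card_Un_disjoint) auto
  finally show ?thesis
    by (simp add: card_rootless_infima_closed_sets card_rooted_infima_closed_sets)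
qed

section \<open>Minimal trees and the function m\<close>

abbreviation leaf :: rtree where
  "leaf \<equiv> Node []"

lemma order_pos: "1 \<le> order T"
  by (cases T) (simp add: order_Node)

lemma length_le_sum_order: "length ts \<le> sum_list (map order ts)"
  by (induction ts) (auto intro: add_mono[OF order_pos, simplified])

lemma order_eq_1_iff: "order T = 1 \<longleftrightarrow> T = leaf"
proof (cases T)
  case (Node ts)
  then show ?thesis
    using order_pos[of "hd ts"] by (cases ts) (auto simp: order_Node)
qed

lemma one_le_prod_list_Suc: "1 \<le> prod_list (map (\<lambda>t. Suc (f t)) ts)"
  by (induction ts) auto

lemma I_pos: "1 \<le> I T"
  using one_le_prod_list_Suc[of I] by (cases T) (auto simp: I_Node intro: trans_le_add2)

lemma three_le_I: "2 \<le> order T \<Longrightarrow> 3 \<le> I T"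
proof (cases T)
  case (Node ts)
  assume "2 \<le> order T"
  then obtain c cs where "ts = c # cs"
    using Node by (cases ts) (auto simp: order_Node)
  moreover have "Suc (I c) \<le> Suc (I c) * prod_list (map (\<lambda>t. Suc (I t)) cs)"
    using mult_le_mono2[OF one_le_prod_list_Suc, of "Suc (I c)" I cs] by simp
  ultimately show ?thesis
    using Node I_pos[of c] by (simp add: I_Node)
qed

lemma I_Node_mset_cong:
  assumes "mset ts = mset ts'"
  shows "I (Node ts) = I (Node ts')"
proof -
  have "sum_list (map f ts) = sum_list (map f ts')"
    and "prod_list (map f ts) = prod_list (map f ts')" for f :: "rtree \<Rightarrow> nat"
    using arg_cong[OF assms, of "image_mset f"]
    by (simp_all flip: sum_mset_sum_list prod_mset_prod_list)
  then show ?thesis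
    by (simp only: I_Node)
qed

lemma order_Node_mset_cong:
  assumes "mset ts = mset ts'"
  shows "order (Node ts) = order (Node ts')"
proof -
  have "sum_list (map order ts) = sum_list (map order ts')"
    using arg_cong[OF assms, of "image_mset order"]
    by (simp flip: sum_mset_sum_list)
  then show ?thesis
    by (simp only: order_Node)
qed

lemma minimal_Node_mset_cong: "mset ts = mset ts' \<Longrightarrow> minimal (Node ts) \<longleftrightarrow> minimal (Node ts')"
  unfolding minimal_def by (metis I_Node_mset_cong order_Node_mset_cong)

lemma mset_eq_Cons_remove1: "c \<in> set ts \<Longrightarrow> mset ts = mset (c # remove1 c ts)"
  by (simp add: insert_DiffM)

lemma finite_order_le: "finite {T. order T \<le> n}"
proof (induction n)
  case 0
  have "{T. order T \<le> 0} = {}"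
    using order_pos by (metis Collect_empty_eq le_zero_eq not_one_le_zero)
  then show ?case
    by (metis finite.emptyI)
next
  case (Suc n)
  have "{T. order T \<le> Suc n} \<subseteq> Node ` {ts. set ts \<subseteq> {t. order t \<le> n} \<and> length ts \<le> n}"
  proof
    fix T assume "T \<in> {T. order T \<le> Suc n}"
    moreover obtain ts where T: "T = Node ts" by (cases T)
    ultimately have sum: "sum_list (map order ts) \<le> n"
      by (simp add: order_Node)
    then have "set ts \<subseteq> {t. order t \<le> n}"
      using member_le_sum_list[of _ "map order ts"] by fastforce
    moreover have "length ts \<le> n"
      using sum length_le_sum_order[of ts] by simp
    ultimately show "T \<in> Node ` {ts. set ts \<subseteq> {t. order t \<le> n} \<and> length ts \<le> n}"
      using T by blast
  qed
  moreover have "finite {ts. set ts \<subseteq> {t. order t \<le> n} \<and> length ts \<le> n}"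
    by (rule finite_lists_length_le[OF Suc.IH])
  ultimately show ?case
    using finite_subset by blast
qed

lemma m_le_I: "m (order T) \<le> I T"
proof -
  have "{I T' |T'. order T' = order T} \<subseteq> I ` {T'. order T' \<le> order T}" by auto
  then have "finite {I T' |T'. order T' = order T}"
    using finite_order_le finite_surj by blast
  then show ?thesis
    unfolding m_def by (rule Min_le) auto
qed

lemma order_star: "order (Node (replicate k leaf)) = Suc k"
  by (simp add: order_Node sum_list_replicate)

lemma ex_minimal_of_order: "1 \<le> n \<Longrightarrow> \<exists>T. order T = n \<and> minimal T"
proof -
  assume "1 \<le> n"
  then have "order (Node (replicate (n - 1) leaf)) = n"
    by (simp add: order_star)
  then have "{I T |T. order T = n} \<noteq> {}" by blast
  moreover have "finite {I T |T. order T = n}"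
    using finite_order_le[of n] by (rule finite_subset[rotated, OF finite_imageI]) auto
  ultimately have "m n \<in> {I T |T. order T = n}"
    unfolding m_def by (rule Min_in[rotated])
  then show ?thesis
    by (auto simp: minimal_def)
qed

lemma not_minimalI: "order T' = order T \<Longrightarrow> I T' < I T \<Longrightarrow> \<not> minimal T"
  using m_le_I[of T'] by (simp add: minimal_def)

lemma I_Node_Cons_less: "I c' < I c \<Longrightarrow> I (Node (c' # cs)) < I (Node (c # cs))"
  using one_le_prod_list_Suc[of I cs] by (simp add: I_Node add_less_le_mono)

lemma minimal_child:
  assumes "minimal (Node ts)" "c \<in> set ts"
  shows "minimal c"
proof (rule ccontr)
  assume "\<not> minimal c"
  obtain c' where c': "order c' = order c" "minimal c'"
    using ex_minimal_of_order order_pos by blast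
  then have "I c' < I c"
    using \<open>\<not> minimal c\<close> m_le_I[of c] by (simp add: minimal_def)
  then have "\<not> minimal (Node (c # remove1 c ts))"
    using c' by (intro not_minimalI[OF _ I_Node_Cons_less]) (simp_all add: order_Node)
  with assms show False
    using minimal_Node_mset_cong mset_eq_Cons_remove1 by metis
qed

lemma ex_smaller_order_less_I: "2 \<le> order T \<Longrightarrow> \<exists>T'. order T' = order T - 1 \<and> I T' < I T"
proof (induction T)
  case (Node ts)
  then obtain c cs where ts: "ts = c # cs"
    by (cases ts) (auto simp: order_Node)
  show ?case
  proof (cases "2 \<le> order c")
    case True
    with Node.IH ts obtain c' where "order c' = order c - 1" "I c' < I c"
      by auto
    with True show ?thesis
      using ts I_Node_Cons_less by (intro exI[of _ "Node (c' # cs)"]) (simp add: order_Node)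
  next
    case False
    then have "order c = 1"
      using order_pos[of c] by linarith
    then have "c = leaf"
      using order_eq_1_iff by blast
    then show ?thesis
      using ts one_le_prod_list_Suc[of I cs]
      by (intro exI[of _ "Node cs"]) (simp add: I_Node order_Node)
  qed
qed

lemma m_less_m_Suc: "1 \<le> n \<Longrightarrow> m n < m (Suc n)"
proof -
  assume "1 \<le> n"
  then obtain T where T: "order T = Suc n" "minimal T"
    using ex_minimal_of_order[of "Suc n"] by auto
  with \<open>1 \<le> n\<close> obtain T' where "order T' = n" "I T' < I T"
    using ex_smaller_order_less_I[of T] by auto
  with T show ?thesis
    using m_le_I[of T'] by (simp add: minimal_def)
qed

lemma m_strict_mono: "1 \<le> a \<Longrightarrow> a < b \<Longrightarrow> m a < m b"
proof (induction b)
  case (Suc b)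
  then have "m a \<le> m b"
    by (cases "a = b") (auto simp: less_Suc_eq)
  also have "m b < m (Suc b)"
    using Suc.prems by (intro m_less_m_Suc) simp
  finally show ?case .
qed simp

lemma le_if_m_le_m: "1 \<le> b \<Longrightarrow> m a \<le> m b \<Longrightarrow> a \<le> b"
  using m_strict_mono[of b a] by (meson leD leI)

section \<open>Values of m up to order 23\<close>

definition I_join :: "nat \<Rightarrow> nat \<Rightarrow> nat" where
  "I_join x y = x + y + Suc x * Suc y"

lemma I_Node_pair: "I (Node [A, B]) = I_join (I A) (I B)"
  by (simp add: I_Node I_join_def)

lemma I_join_mono: "x \<le> x' \<Longrightarrow> y \<le> y' \<Longrightarrow> I_join x y \<le> I_join x' y'"
  unfolding I_join_def by (intro add_mono mult_le_mono) auto

lemma m_Suc_add_le: "1 \<le> a \<Longrightarrow> 1 \<le> b \<Longrightarrow> m (Suc (a + b)) \<le> I_join (m a) (m b)"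
proof -
  assume "1 \<le> a" "1 \<le> b"
  then obtain A B where "order A = a" "minimal A" "order B = b" "minimal B"
    using ex_minimal_of_order by metis
  then show ?thesis
    using m_le_I[of "Node [A, B]"] by (simp add: order_Node I_Node_pair minimal_def)
qed

lemma m_Suc_le_star: "m (Suc k) \<le> k + 2 ^ k"
  using m_le_I[of "Node (replicate k leaf)"]
  by (simp add: order_star I_Node sum_list_replicate numeral_2_eq_2)

text \<open>Values of explicit trees of order n: a star for n \<le> 5, and above that the pair of two
  earlier trees listed in the proof below. For n \<le> 7 they coincide with \<open>m_lower\<close>.\<close>
definition m_upper :: "nat \<Rightarrow> nat" where
  "m_upper n = [0, 1, 3, 6, 11, 20, 36, 61, 101, 166, 283, 481, 816, 1336, 2181, 3693, 6267,
     10581, 17301, 28221, 47877, 81141, 137421, 224781] ! n"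

lemma m_le_m_upper:
  assumes "1 \<le> n" "n \<le> 23"
  shows "m n \<le> m_upper n"
proof -
  have join: "m (Suc (a + b)) \<le> I_join x y" if "m a \<le> x" "m b \<le> y" "1 \<le> a" "1 \<le> b" for a b x y
    using that m_Suc_add_le I_join_mono le_trans by metis
  have m1: "m 1 \<le> 1" and m2: "m 2 \<le> 3" and m3: "m 3 \<le> 6" and m4: "m 4 \<le> 11" and m5: "m 5 \<le> 20"
    using m_Suc_le_star[of 0] m_Suc_le_star[of 1] m_Suc_le_star[of 2] m_Suc_le_star[of 3]
      m_Suc_le_star[of 4]
    by (simp_all add: numeral_eq_Suc)
  have m6: "m 6 \<le> 36" using join[OF m4 m1] by (simp add: I_join_def)
  have m7: "m 7 \<le> 61" using join[OF m3 m3] by (simp add: I_join_def)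
  have m8: "m 8 \<le> 101" using join[OF m4 m3] by (simp add: I_join_def)
  have m9: "m 9 \<le> 166" using join[OF m4 m4] by (simp add: I_join_def)
  have m10: "m 10 \<le> 283" using join[OF m5 m4] by (simp add: I_join_def)
  have m11: "m 11 \<le> 481" using join[OF m5 m5] by (simp add: I_join_def)
  have m12: "m 12 \<le> 816" using join[OF m7 m4] by (simp add: I_join_def)
  have m13: "m 13 \<le> 1336" using join[OF m8 m4] by (simp add: I_join_def)
  have m14: "m 14 \<le> 2181" using join[OF m9 m4] by (simp add: I_join_def)
  have m15: "m 15 \<le> 3693" using join[OF m9 m5] by (simp add: I_join_def)
  have m16: "m 16 \<le> 6267" using join[OF m10 m5] by (simp add: I_join_def)
  have m17: "m 17 \<le> 10581" using join[OF m9 m7] by (simp add: I_join_def)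
  have m18: "m 18 \<le> 17301" using join[OF m9 m8] by (simp add: I_join_def)
  have m19: "m 19 \<le> 28221" using join[OF m9 m9] by (simp add: I_join_def)
  have m20: "m 20 \<le> 47877" using join[OF m10 m9] by (simp add: I_join_def)
  have m21: "m 21 \<le> 81141" using join[OF m11 m9] by (simp add: I_join_def)
  have m22: "m 22 \<le> 137421" using join[OF m12 m9] by (simp add: I_join_def)
  have m23: "m 23 \<le> 224781" using join[OF m13 m9] by (simp add: I_join_def)
  have "n \<in> set [1, 2, 3, 4, 5, 6, 7, 8, 9, 10, 11, 12, 13, 14, 15, 16, 17, 18, 19, 20, 21, 22, 23]"
    using assms by (simp only: set_simps insert_iff empty_iff) presburger
  then show ?thesis
    using m1 m2 m3 m4 m5 m6 m7 m8 m9 m10 m11 m12 m13 m14 m15 m16 m17 m18 m19 m20 m21 m22 m23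
    by (simp only: set_simps insert_iff empty_iff) (auto simp: m_upper_def)
qed

fun compositions :: "nat \<Rightarrow> nat list list" where
  "compositions 0 = [[]]"
| "compositions (Suc s) =
     concat (map (\<lambda>i. map (Cons i) (compositions (Suc s - i))) [1..<Suc (Suc s)])"

lemma in_compositions: "\<forall>k\<in>set ks. 1 \<le> k \<Longrightarrow> ks \<in> set (compositions (sum_list ks))"
proof (induction ks)
  case (Cons k ks)
  then obtain s where s: "k + sum_list ks = Suc s"
    by (cases "k + sum_list ks") auto
  then have "Suc s - k = sum_list ks"
    by simp
  with Cons s have "k \<in> set [1..<Suc (Suc s)]" "ks \<in> set (compositions (Suc s - k))"
    by auto
  with s show ?case
    by (auto simp del: upt_Suc intro!: bexI[of _ k])
qed simp

lemma prod_list_map_mono: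
  "(\<And>x. x \<in> set xs \<Longrightarrow> f x \<le> g x) \<Longrightarrow> prod_list (map f xs) \<le> prod_list (map g xs :: nat list)"
  by (induction xs) (auto intro: mult_le_mono)

text \<open>The exact values of m up to order 7; the entry for order 0 is a placeholder.\<close>
definition m_lower :: "nat \<Rightarrow> nat" where
  "m_lower k = [0, 1, 3, 6, 11, 20, 36, 61] ! k"

definition lower_recurrence :: "nat list \<Rightarrow> nat" where
  "lower_recurrence ks = sum_list (map m_lower ks) + prod_list (map (\<lambda>k. Suc (m_lower k)) ks)"

lemma lower_recurrence_le_I:
  assumes "\<And>t. t \<in> set ts \<Longrightarrow> m_lower (order t) \<le> I t"
  shows "lower_recurrence (map order ts) \<le> I (Node ts)"
proof -
  have "prod_list (map (\<lambda>t. Suc (m_lower (order t))) ts) \<le> prod_list (map (\<lambda>t. Suc (I t)) ts)"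
    using assms by (intro prod_list_map_mono) simp
  then show ?thesis
    using assms unfolding lower_recurrence_def I_Node
    by (simp add: o_def add_mono sum_list_mono)
qed

lemma m_lower_compositions_check:
  "list_all (\<lambda>s. list_all (\<lambda>ks. m_lower (Suc s) \<le> lower_recurrence ks) (compositions s)) [0..<7]"
  by code_simp

lemma m_lower_le_I: "order T \<le> 7 \<Longrightarrow> m_lower (order T) \<le> I T"
proof (induction T)
  case (Node ts)
  let ?ks = "map order ts"
  have sum: "sum_list ?ks \<le> 6"
    using Node.prems by (simp add: order_Node)
  have "m_lower (order t) \<le> I t" if "t \<in> set ts" for t
  proof -
    have "order t \<le> sum_list ?ks"
      using that by (simp add: member_le_sum_list)
    with Node.IH that sum show ?thesis by simp
  qed
  then have "lower_recurrence ?ks \<le> I (Node ts)"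
    by (rule lower_recurrence_le_I)
  moreover have "?ks \<in> set (compositions (sum_list ?ks))"
    using order_pos by (intro in_compositions) auto
  ultimately show ?case
    using m_lower_compositions_check sum by (fastforce simp: order_Node list_all_iff)
qed

section \<open>Improving trees whose root is not binary\<close>

lemma atLeastAtMost_1_7: "{1..7::nat} = {1, 2, 3, 4, 5, 6, 7}"
  by code_simp

lemma not_minimal_single_branch:
  assumes "3 \<le> order (Node [c])"
  shows "\<not> minimal (Node [c])"
proof -
  obtain cs where c: "c = Node cs" by (cases c)
  with assms obtain c' cs' where "cs = c' # cs'"
    by (cases cs) (auto simp: order_Node)
  then have "1 \<le> sum_list (map I cs)"
    using I_pos[of c'] by simp
  then have "I (Node (leaf # cs)) < I (Node [c])"
    using c by (simp add: I_Node)
  moreover have "order (Node (leaf # cs)) = order (Node [c])"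
    using c by (simp add: order_Node)
  ultimately show ?thesis
    by (rule not_minimalI[rotated])
qed

lemma three_sum_list_less_two_prod_list:
  fixes vs :: "nat list"
  assumes "\<forall>v\<in>set vs. 1 \<le> v" "2 \<le> length vs"
  shows "3 * sum_list vs < 2 * prod_list (map Suc vs)"
  using assms
proof (induction vs)
  case (Cons v ws)
  show ?case
  proof (cases "2 \<le> length ws")
    case True
    with Cons have IH: "3 * sum_list ws < 2 * prod_list (map Suc ws)"
      by simp
    from True Cons.prems(1) have "1 \<le> sum_list ws"
      by (cases ws) auto
    with IH have "v * 3 \<le> v * (2 * prod_list (map Suc ws))"
      by (intro mult_le_mono2) linarith
    moreover have "3 * sum_list (v # ws) = 3 * v + 3 * sum_list ws"
      by simp
    ultimately have "3 * sum_list (v # ws) < v * (2 * prod_list (map Suc ws)) + 2 * prod_list (map Suc ws)"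
      using IH by linarith
    then show ?thesis
      by (simp add: algebra_simps)
  next
    case False
    with Cons.prems(2) have "length ws = 1"
      by simp
    with Cons.prems(1) obtain w where "ws = [w]" "1 \<le> v" "1 \<le> w"
      by (auto simp: length_Suc_conv)
    moreover have "v + w \<le> 2 * (v * w)"
      using calculation(2,3) by (simp add: add_le_mono mult_2)
    ultimately show ?thesis
      by (simp add: algebra_simps)
  qed
qed simp

lemma three_sum_I_less_two_prod_I:
  "2 \<le> length ts \<Longrightarrow> 3 * sum_list (map I ts) < 2 * prod_list (map (\<lambda>t. Suc (I t)) ts)"
  using three_sum_list_less_two_prod_list[of "map I ts"] I_pos by (simp add: o_def)

lemma I_rotate_less:
  assumes "2 \<le> I A" "2 \<le> length rs"
  shows "I (Node [A, Node (B # rs)]) < I (Node (Node [A, B] # rs))"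
proof -
  let ?S = "sum_list (map I rs)" and ?P = "prod_list (map (\<lambda>t. Suc (I t)) rs)"
  have "3 * (I A * ?S + ?S) = Suc (I A) * (3 * ?S)"
    by (simp add: algebra_simps)
  also have "\<dots> < Suc (I A) * (2 * ?P)"
    using three_sum_I_less_two_prod_I[OF assms(2)] by (intro mult_strict_left_mono) simp_all
  also have "\<dots> \<le> 3 * (I A * ?P)"
    using mult_right_mono[OF assms(1), of ?P] by (simp add: algebra_simps)
  finally have "I A * ?S + ?S < I A * ?P"
    by simp
  moreover have "I (Node [A, Node (B # rs)]) + I A * ?P = I (Node (Node [A, B] # rs)) + (I A * ?S + ?S)"
    by (simp add: I_Node algebra_simps)
  ultimately show ?thesis
    by linarith
qed

lemma not_minimal_rotate:
  assumes "2 \<le> I A" "2 \<le> length rs"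
  shows "\<not> minimal (Node (Node [A, B] # rs))"
  using I_rotate_less[OF assms, of B]
  by (intro not_minimalI[of "Node [A, Node (B # rs)]"]) (simp_all add: order_Node)

lemma not_minimal_binary_branch:
  assumes "Node [A, B] \<in> set ts" "3 \<le> length ts" "4 \<le> order (Node [A, B])"
  shows "\<not> minimal (Node ts)"
proof -
  let ?rs = "remove1 (Node [A, B]) ts"
  have len: "2 \<le> length ?rs"
    using assms(1,2) by (simp add: length_remove1)
  have swap: "minimal (Node (Node [A, B] # ?rs)) \<longleftrightarrow> minimal (Node (Node [B, A] # ?rs))"
    by (simp add: minimal_def I_Node order_Node algebra_simps)
  have "2 \<le> order A \<or> 2 \<le> order B"
    using assms(3) order_pos[of A] order_pos[of B] by (simp add: order_Node) arith
  then have "2 \<le> I A \<or> 2 \<le> I B"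
    using three_le_I by fastforce
  then have "\<not> minimal (Node (Node [A, B] # ?rs))"
    using not_minimal_rotate[OF _ len] swap by blast
  then show ?thesis
    using minimal_Node_mset_cong mset_eq_Cons_remove1[OF assms(1)] by metis
qed

lemma merge_three_branches_check:
  "\<forall>p\<in>{1..7}. \<forall>q\<in>{1..7}. \<forall>r\<in>{1..7}.
     Suc (m_upper (p + q + r)) \<le> Suc (m_lower p) * Suc (m_lower q) * Suc (m_lower r) \<and>
     m_upper (p + q + r) + Suc (m_upper (p + q + r)) * 4
       < m_lower p + m_lower q + m_lower r + Suc (m_lower p) * Suc (m_lower q) * Suc (m_lower r) * 4"
  unfolding atLeastAtMost_1_7 by (simp add: m_lower_def m_upper_def)

lemma affine_less_from_four:
  fixes e a s b x :: nat
  assumes "e + a * 4 < s + b * 4" "a \<le> b" "4 \<le> x"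
  shows "e + a * x < s + b * x"
proof -
  obtain d where b: "b = a + d"
    using assms(2) le_Suc_ex by blast
  with assms(1) have "e < s + d * 4"
    by (simp add: algebra_simps)
  also have "\<dots> \<le> s + d * x"
    using assms(3) by simp
  finally show ?thesis
    using b by (simp add: algebra_simps)
qed

lemma three_small_branches_value_less:
  assumes small: "order c1 \<le> 7" "order c2 \<le> 7" "order c3 \<le> 7"
    and e: "e \<le> m_upper (order c1 + order c2 + order c3)" and x: "4 \<le> x"
  shows "e + Suc e * x < I c1 + I c2 + I c3 + Suc (I c1) * Suc (I c2) * Suc (I c3) * x"
proof -
  let ?p = "order c1" and ?q = "order c2" and ?r = "order c3"
  let ?u = "m_upper (?p + ?q + ?r)"
  let ?SL = "m_lower ?p + m_lower ?q + m_lower ?r"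
  let ?PL = "Suc (m_lower ?p) * Suc (m_lower ?q) * Suc (m_lower ?r)"
  let ?SA = "I c1 + I c2 + I c3" and ?PA = "Suc (I c1) * Suc (I c2) * Suc (I c3)"
  have "m_lower ?p \<le> I c1" "m_lower ?q \<le> I c2" "m_lower ?r \<le> I c3"
    using small m_lower_le_I by simp_all
  then have SL: "?SL \<le> ?SA" and PL: "?PL \<le> ?PA"
    by (simp, intro mult_le_mono) simp_all
  have check: "Suc ?u \<le> ?PL" "?u + Suc ?u * 4 < ?SL + ?PL * 4"
    using merge_three_branches_check[rule_format, of ?p ?q ?r] small order_pos by simp_all
  have "e + Suc e * 4 \<le> ?u + Suc ?u * 4"
    using e by simp
  also have "\<dots> < ?SL + ?PL * 4"
    by (fact check(2))
  also have "\<dots> \<le> ?SA + ?PA * 4"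
    using SL PL by simp
  finally have "e + Suc e * 4 < ?SA + ?PA * 4" .
  moreover have "Suc e \<le> ?PA"
    using e check(1) PL by linarith
  ultimately show ?thesis
    using x by (rule affine_less_from_four)
qed

text \<open>Three small branches are replaced by a single minimal branch of the same total order.\<close>
lemma not_minimal_merge_three_branches:
  assumes small: "order c1 \<le> 7" "order c2 \<le> 7" "order c3 \<le> 7"
    and rest: "4 \<le> prod_list (map (\<lambda>t. Suc (I t)) rs)"
  shows "\<not> minimal (Node (c1 # c2 # c3 # rs))"
proof -
  let ?s = "order c1 + order c2 + order c3"
  have "1 \<le> ?s"
    using order_pos[of c1] by simp
  then obtain W where W: "order W = ?s" "minimal W"
    using ex_minimal_of_order by blast
  then have "I W \<le> m_upper ?s"
    using small m_le_m_upper[of ?s] \<open>1 \<le> ?s\<close> by (simp add: minimal_def)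
  then have "I (Node (W # rs)) < I (Node (c1 # c2 # c3 # rs))"
    using three_small_branches_value_less[OF small _ rest] by (simp add: I_Node algebra_simps)
  moreover have "order (Node (W # rs)) = order (Node (c1 # c2 # c3 # rs))"
    using W by (simp add: order_Node)
  ultimately show ?thesis
    by (rule not_minimalI[rotated])
qed

lemma three_branches_check:
  "\<forall>p\<in>{1..7}. \<forall>q\<in>{1..7}. \<forall>r\<in>{1..7}.
     7 \<le> p + q + r \<longrightarrow> m_upper (Suc (p + q + r)) < lower_recurrence [p, q, r]"
  unfolding atLeastAtMost_1_7 by (simp add: lower_recurrence_def m_lower_def m_upper_def)

lemma not_minimal_three_small_branches:
  assumes small: "order c1 \<le> 7" "order c2 \<le> 7" "order c3 \<le> 7"
    and big: "8 \<le> order (Node [c1, c2, c3])"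
  shows "\<not> minimal (Node [c1, c2, c3])"
proof -
  let ?n = "order (Node [c1, c2, c3])"
  have n: "?n = Suc (order c1 + order c2 + order c3)"
    by (simp add: order_Node)
  have "m ?n \<le> m_upper ?n"
    using n small by (intro m_le_m_upper) simp_all
  also have "\<dots> < lower_recurrence [order c1, order c2, order c3]"
    using three_branches_check[rule_format, of "order c1" "order c2" "order c3"] small big n
      order_pos[of c1] order_pos[of c2] order_pos[of c3]
    by simp
  also have "\<dots> \<le> I (Node [c1, c2, c3])"
    using lower_recurrence_le_I[of "[c1, c2, c3]"] small m_lower_le_I by auto
  finally show ?thesis
    by (simp add: minimal_def)
qed

lemma four_le_prod_list_Suc_I: "2 \<le> length rs \<Longrightarrow> 4 \<le> prod_list (map (\<lambda>t. Suc (I t)) rs)"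
proof -
  assume "2 \<le> length rs"
  then obtain r1 r2 rs' where rs: "rs = r1 # r2 # rs'"
    by (metis Suc_le_length_iff numeral_2_eq_2)
  have "(4::nat) = 2 * 2 * 1"
    by simp
  also have "\<dots> \<le> Suc (I r1) * Suc (I r2) * prod_list (map (\<lambda>t. Suc (I t)) rs')"
    using I_pos[of r1] I_pos[of r2] one_le_prod_list_Suc[of I rs'] by (intro mult_le_mono) simp_all
  also have "\<dots> = prod_list (map (\<lambda>t. Suc (I t)) rs)"
    using rs by (simp add: algebra_simps)
  finally show ?thesis .
qed

lemma not_minimal_small_branches:
  assumes small: "\<forall>c\<in>set ts. order c \<le> 7" and len: "3 \<le> length ts" and big: "8 \<le> order (Node ts)"
  shows "\<not> minimal (Node ts)"
proof -
  consider "length ts = 3" | "length ts = 4" | "5 \<le> length ts"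
    using len by linarith
  then show ?thesis
  proof cases
    case 1
    then obtain c1 c2 c3 where "ts = [c1, c2, c3]"
      by (auto simp: numeral_eq_Suc length_Suc_conv)
    with small big show ?thesis
      using not_minimal_three_small_branches[of c1 c2 c3] by simp
  next
    case 2
    have "\<exists>d\<in>set ts. 2 \<le> order d"
    proof (rule ccontr)
      assume "\<not> (\<exists>d\<in>set ts. 2 \<le> order d)"
      then have "sum_list (map order ts) \<le> sum_list (map (\<lambda>_. 1) ts)"
        by (intro sum_list_mono) auto
      with 2 big show False
        by (simp add: order_Node sum_list_triv)
    qed
    then obtain d where d: "d \<in> set ts" "2 \<le> order d"
      by blast
    with 2 have "length (remove1 d ts) = 3"
      by (simp add: length_remove1)
    then obtain c1 c2 c3 where cs: "remove1 d ts = [c1, c2, c3]"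
      by (auto simp: numeral_eq_Suc length_Suc_conv)
    then have "mset ts = mset [c1, c2, c3, d]"
      using mset_eq_Cons_remove1[OF d(1)] by (simp add: add_mset_commute)
    moreover have "c1 \<in> set ts" "c2 \<in> set ts" "c3 \<in> set ts"
      using cs set_remove1_subset[of d ts] by auto
    then have "\<not> minimal (Node [c1, c2, c3, d])"
      using small three_le_I[OF d(2)] by (intro not_minimal_merge_three_branches) auto
    ultimately show ?thesis
      using minimal_Node_mset_cong by metis
  next
    case 3
    then obtain c1 c2 c3 rs where "ts = c1 # c2 # c3 # rs" "2 \<le> length rs"
      by (auto simp: numeral_eq_Suc Suc_le_length_iff)
    with small show ?thesis
      using not_minimal_merge_three_branches[OF _ _ _ four_le_prod_list_Suc_I, of c1 c2 c3 rs]
      by simp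
  qed
qed

section \<open>Minimal trees of large order\<close>

lemma not_minimal_wide_root:
  assumes binary: "\<And>c. c \<in> set ts \<Longrightarrow> 8 \<le> order c \<Longrightarrow> length (children c) = 2"
    and len: "3 \<le> length ts" and big: "8 \<le> order (Node ts)"
  shows "\<not> minimal (Node ts)"
proof (cases "\<forall>c\<in>set ts. order c \<le> 7")
  case True
  then show ?thesis
    using len big by (rule not_minimal_small_branches)
next
  case False
  then obtain c where c: "c \<in> set ts" "8 \<le> order c"
    by auto
  then have "length (children c) = 2"
    by (rule binary)
  then obtain A B where "c = Node [A, B]"
    by (cases c) (auto simp: numeral_2_eq_2 length_Suc_conv)
  with c len show ?thesis
    using not_minimal_binary_branch[of A B ts] by simp
qed

lemma minimal_two_branches:
  assumes "minimal T" "8 \<le> order T"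
  shows "length (children T) = 2"
  using assms
proof (induction "order T" arbitrary: T rule: less_induct)
  case less
  obtain ts where T: "T = Node ts" by (cases T)
  with less.prems have "length ts \<noteq> 0"
    by (auto simp: order_Node)
  then consider "length ts = 1" | "length ts = 2" | "3 \<le> length ts"
    by arith
  then show ?case
  proof cases
    case 1
    then obtain c where "ts = [c]"
      by (auto simp: length_Suc_conv)
    with less.prems T show ?thesis
      using not_minimal_single_branch[of c] by simp
  next
    case 2
    with T show ?thesis by simp
  next
    case 3
    have "length (children c) = 2" if "c \<in> set ts" "8 \<le> order c" for c
    proof (rule less.hyps)
      show "order c < order T"
        using that T member_le_sum_list[of "order c" "map order ts"] by (simp add: order_Node)
      show "minimal c"
        using less.prems(1) T that(1) by (simp add: minimal_child)
    qed (fact that(2))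
    with 3 less.prems T show ?thesis
      using not_minimal_wide_root[of ts] by simp
  qed
qed

lemma order_le_if_minimal_rotation:
  assumes "minimal (Node [Node [A1, A2], D])"
  shows "order A1 \<le> order D"
proof -
  let ?T = "Node [Node [A1, A2], D]" and ?T' = "Node [A1, Node [A2, D]]"
  have "I ?T + I D = I ?T' + I A1" "order ?T' = order ?T"
    by (simp_all add: I_Node order_Node algebra_simps)
  moreover have "I ?T \<le> I ?T'"
    using assms m_le_I[of ?T'] calculation(2) by (simp add: minimal_def)
  ultimately have "I A1 \<le> I D"
    by linarith
  moreover have "I D = m (order D)"
    using minimal_child[OF assms] by (simp add: minimal_def)
  ultimately have "m (order A1) \<le> m (order D)"
    using m_le_I[of A1] by linarith
  then show ?thesis
    using le_if_m_le_m order_pos by blast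
qed

lemma rotation_pair_check:
  "\<forall>b\<in>{1..7}. \<forall>a1\<in>{1..7}. \<forall>a2\<in>{1..7}. a1 \<le> b \<longrightarrow> a2 \<le> b \<longrightarrow> 18 \<le> a1 + a2 + b + 2 \<longrightarrow>
     m_upper (a1 + a2 + b + 2) < I_join (I_join (m_lower a1) (m_lower a2)) (m_lower b)"
  unfolding atLeastAtMost_1_7 by (simp add: I_join_def m_lower_def m_upper_def)

lemma minimal_pair_branches_large:
  assumes min: "minimal (Node [C, D])" and big: "18 \<le> order (Node [C, D])"
  shows "8 \<le> order D"
proof (rule ccontr)
  assume "\<not> 8 \<le> order D"
  then have D: "order D \<le> 7" by simp
  have "length (children C) = 2"
    using min big D minimal_child[OF min] by (intro minimal_two_branches) (simp_all add: order_Node)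
  then obtain A1 A2 where C: "C = Node [A1, A2]"
    by (cases C) (auto simp: numeral_2_eq_2 length_Suc_conv)
  have a1: "order A1 \<le> order D"
    using min C order_le_if_minimal_rotation by blast
  have "minimal (Node [Node [A2, A1], D])"
    using min C by (simp add: minimal_def I_Node order_Node algebra_simps)
  then have a2: "order A2 \<le> order D"
    by (rule order_le_if_minimal_rotation)
  let ?n = "order A1 + order A2 + order D + 2"
  have n: "order (Node [C, D]) = ?n"
    using C by (simp add: order_Node)
  have "m_upper ?n < I_join (I_join (m_lower (order A1)) (m_lower (order A2))) (m_lower (order D))"
    using rotation_pair_check[rule_format, of "order D" "order A1" "order A2"] a1 a2 D big n
      order_pos[of A1] order_pos[of A2] order_pos[of D]
    by simp
  also have "\<dots> \<le> I (Node [C, D])"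
    using C a1 a2 D by (simp add: I_Node_pair I_join_mono m_lower_le_I)
  also have "\<dots> = m ?n"
    using min n by (simp add: minimal_def)
  also have "\<dots> \<le> m_upper ?n"
    using a1 a2 D by (intro m_le_m_upper) simp_all
  finally show False by simp
qed

theorem lemma3p4:
  fixes T :: rtree
  assumes "minimal T" and "order T \<ge> 18"
  shows "length (children T) = 2 \<and> (\<forall>c\<in>set (children T). length (children c) = 2)"
proof -
  obtain ts where T: "T = Node ts" by (cases T)
  with assms have "length ts = 2"
    using minimal_two_branches[of T] by simp
  then obtain C D where ts: "ts = [C, D]"
    by (auto simp: numeral_2_eq_2 length_Suc_conv)
  have min: "minimal (Node [C, D])" and big: "18 \<le> order (Node [C, D])"
    using assms T ts by simp_all
  have "8 \<le> order D"
    using min big by (rule minimal_pair_branches_large)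
  moreover have "8 \<le> order C"
    using min big minimal_Node_mset_cong[of "[C, D]" "[D, C]"]
    by (intro minimal_pair_branches_large[of D]) (simp_all add: order_Node add_mset_commute)
  ultimately show ?thesis
    using minimal_two_branches minimal_child[OF min] T ts by simp
qed

end
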